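(* Let $X$ be a subshift with shift map $\sigma$ and let $\mu$ be a $\sigma$-invariant Borel probability measure on $X$. For $x \in X$ and $n\in\mathbb{N}$ let $P_n(x) = \{y\in X: y_i = x_i \text{ for } 0\le i<n\}$ and $R_n(x) = \inf\{k>0 : x_{[k,k+n)} = x_{[0,n)}\}$. Suppose that for $\mu$-a.e. $x \in X$ the quantity $\limsup_{n\to\infty} -\frac{1}{n^{\beta}}\log\mu(P_n(x))$, as a function of $\beta>0$, has critical value $c$. Then for $\mu$-a.e. $x\in X$ the critical value of $\limsup_{n\to\infty}\frac{1}{n^{\beta}}\log R_n(x)$ (as a function of $\beta>0$) is at most $c$; that is, $\limsup_{n\to\infty}\frac{1}{n^{\beta}}\log R_n(x) = 0$ for every $\beta>c$.
   Context: Critical value: for a family of quantities $F(\beta)\in[0,\infty]$ indexed by $\beta>0$, we say $F$ has critical value $c$ if $F(\beta) = \infty$ for all $0<\beta<c$ and $F(\beta) = 0$ for all $\beta > c$. *)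

theory Defs
  imports "HOL-Probability.Probability"
begin

text \<open>One-sided subshifts over a finite alphabet of natural numbers.
  The space of sequences nat \<Rightarrow> nat carries the product topology
  (nat is discrete), so its Borel sets are the usual ones.\<close>

definition shift :: "(nat \<Rightarrow> nat) \<Rightarrow> (nat \<Rightarrow> nat)" where
  "shift x = (\<lambda>i. x (Suc i))"

definition subshift :: "(nat \<Rightarrow> nat) set \<Rightarrow> bool" where
  "subshift X \<longleftrightarrow> X \<noteq> {} \<and> closed X \<and> shift ` X \<subseteq> X \<and>
     (\<exists>A. finite A \<and> (\<forall>x\<in>X. \<forall>i. x i \<in> A))"

definition cyl :: "(nat \<Rightarrow> nat) set \<Rightarrow> nat \<Rightarrow> (nat \<Rightarrow> nat) \<Rightarrow> (nat \<Rightarrow> nat) set" where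
  "cyl X n x = {y \<in> X. \<forall>i<n. y i = x i}"

text \<open>Return time R_n(x) (infimum of the empty set is \<infinity>).\<close>
definition return_time :: "nat \<Rightarrow> (nat \<Rightarrow> nat) \<Rightarrow> ereal" where
  "return_time n x = Inf {ereal (real k) | k. k > 0 \<and> (\<forall>i<n. x (k + i) = x i)}"

definition meas_rate :: "(nat \<Rightarrow> nat) measure \<Rightarrow> (nat \<Rightarrow> nat) set \<Rightarrow> real \<Rightarrow> (nat \<Rightarrow> nat) \<Rightarrow> nat \<Rightarrow> ereal" where
  "meas_rate M X \<beta> x n =
     (if measure M (cyl X n x) = 0 then \<infinity>
      else ereal (- ln (measure M (cyl X n x)) / (real n powr \<beta>)))"

definition return_rate :: "real \<Rightarrow> (nat \<Rightarrow> nat) \<Rightarrow> nat \<Rightarrow> ereal" where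
  "return_rate \<beta> x n =
     (if return_time n x = \<infinity> then \<infinity>
      else ereal (ln (real_of_ereal (return_time n x)) / (real n powr \<beta>)))"

definition has_critical_value :: "(real \<Rightarrow> ereal) \<Rightarrow> real \<Rightarrow> bool" where
  "has_critical_value F c \<longleftrightarrow>
     (\<forall>\<beta>. 0 < \<beta> \<and> \<beta> < c \<longrightarrow> F \<beta> = \<infinity>) \<and> (\<forall>\<beta>. 0 < \<beta> \<and> \<beta> > c \<longrightarrow> F \<beta> = 0)"

end

theory Submission
  imports Defs "HOL-Real_Asymp.Real_Asymp"
begin

text \<open>For a cylinder C of positive measure, the points of C that do not come back to C within
  m steps of the measure-preserving shift have measure at most 1/(m+1): their preimages under the
  first m+1 iterates are disjoint and have equal measure (Kac's argument). With m = floor(n^2 / mu(C))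
  and summing over the finitely many cylinders of length n, the points with
  R_n(x) > n^2 / mu(P_n(x)) form a set of measure at most 1/n^2. By Borel--Cantelli, almost every x
  eventually satisfies log R_n(x) <= 2 log n - log mu(P_n(x)); after division by n^beta the first
  term tends to 0 and the second has limsup 0 as soon as beta > c.\<close>

definition non_return :: "('a \<Rightarrow> 'a) \<Rightarrow> 'a set \<Rightarrow> nat \<Rightarrow> 'a set" where
  "non_return T C m = {x \<in> C. \<forall>k\<in>{1..m}. (T ^^ k) x \<notin> C}"

lemma non_return_subset: "non_return T C m \<subseteq> C"
  by (auto simp: non_return_def)

lemma disjoint_family_vimage_non_return:
  "disjoint_family_on (\<lambda>j. (T ^^ j) -` non_return T C m) {0..m}"
proof -
  have "(T ^^ i) -` non_return T C m \<inter> (T ^^ j) -` non_return T C m = {}"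
    if "i < j" "j \<le> m" for i j
  proof (rule equals0I)
    fix y assume "y \<in> (T ^^ i) -` non_return T C m \<inter> (T ^^ j) -` non_return T C m"
    moreover have "(T ^^ j) y = (T ^^ (j - i)) ((T ^^ i) y)"
      using that by (metis funpow_add le_add_diff_inverse2 less_imp_le o_apply)
    moreover have "j - i \<in> {1..m}" using that by auto
    ultimately show False unfolding non_return_def by auto
  qed
  then show ?thesis
    unfolding disjoint_family_on_def by (metis Int_commute atLeastAtMost_iff nat_neq_iff)
qed

locale measure_preserving_transformation = prob_space M for M :: "'a measure" +
  fixes T :: "'a \<Rightarrow> 'a"
  assumes T_measurable: "T \<in> M \<rightarrow>\<^sub>M M"
    and distr_T: "distr M M T = M"
begin

lemma funpow_T_measurable: "T ^^ k \<in> M \<rightarrow>\<^sub>M M"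
  by (rule measurable_compose_n[OF T_measurable])

lemma distr_funpow_T: "distr M M (T ^^ k) = M"
proof (induction k)
  case 0
  show ?case by (simp add: distr_id2)
next
  case (Suc k)
  have "distr M M (T ^^ Suc k) = distr (distr M M T) M (T ^^ k)"
    unfolding funpow_Suc_right
    by (rule distr_distr[symmetric]) (auto intro: funpow_T_measurable T_measurable)
  with Suc distr_T show ?case by (simp only:)
qed

lemma measure_vimage_funpow_T:
  assumes "A \<in> sets M"
  shows "measure M ((T ^^ k) -` A \<inter> space M) = measure M A"
  using measure_distr[OF funpow_T_measurable assms] distr_funpow_T by simp

lemma non_return_in_sets:
  assumes "C \<in> sets M"
  shows "non_return T C m \<in> sets M"
proof -
  note funpow_T_measurable[measurable]
  have "non_return T C m = {x \<in> space M. x \<in> C \<and> (\<forall>k\<in>{1..m}. (T ^^ k) x \<notin> C)}"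
    using sets.sets_into_space[OF assms] by (auto simp: non_return_def)
  also have "\<dots> \<in> sets M" using assms by measurable
  finally show ?thesis .
qed

lemma measure_non_return_le:
  assumes "C \<in> sets M"
  shows "(real m + 1) * measure M (non_return T C m) \<le> 1"
proof -
  let ?A = "non_return T C m"
  let ?D = "\<lambda>j. (T ^^ j) -` ?A \<inter> space M"
  have A: "?A \<in> sets M" by (rule non_return_in_sets[OF assms])
  have D: "?D j \<in> sets M" for j by (rule measurable_sets[OF funpow_T_measurable A])
  have "disjoint_family_on ?D {0..m}"
    using disjoint_family_vimage_non_return by (rule disjoint_family_on_bisimulation) auto
  then have "measure M (\<Union>j\<in>{0..m}. ?D j) = (\<Sum>j\<in>{0..m}. measure M (?D j))"
    using D by (intro finite_measure_finite_Union) auto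
  also have "\<dots> = (real m + 1) * measure M ?A"
    by (simp add: measure_vimage_funpow_T[OF A])
  finally show ?thesis using prob_le_1 by metis
qed

lemma measure_non_return_floor_le:
  assumes "C \<in> sets M" "r > 0"
  shows "measure M (non_return T C (nat \<lfloor>r / measure M C\<rfloor>)) \<le> measure M C / r"
proof (cases "measure M C = 0")
  case True
  have "measure M (non_return T C (nat \<lfloor>r / measure M C\<rfloor>)) \<le> measure M C"
    using assms(1) by (intro finite_measure_mono non_return_subset)
  with True show ?thesis by simp
next
  case False
  let ?m = "nat \<lfloor>r / measure M C\<rfloor>"
  let ?A = "non_return T C ?m"
  have pos: "measure M C > 0" using False measure_nonneg[of M C] by linarith
  have "measure M ?A * (r / measure M C) \<le> measure M ?A * (real ?m + 1)"
    by (intro mult_left_mono measure_nonneg) linarith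
  also have "\<dots> \<le> 1"
    using measure_non_return_le[OF assms(1), of ?m] by (simp add: mult.commute)
  finally show ?thesis using pos assms(2) by (simp add: field_simps)
qed

end

lemma funpow_shift: "(shift ^^ k) x = (\<lambda>i. x (k + i))"
  by (induction k arbitrary: x) (auto simp: shift_def)

lemma funpow_shift_in_cyl_iff:
  assumes "shift ` X \<subseteq> X" "x \<in> X"
  shows "(shift ^^ k) x \<in> cyl X n x \<longleftrightarrow> (\<forall>i<n. x (k + i) = x i)"
proof -
  have "(shift ^^ k) x \<in> X"
    using assms by (induction k) auto
  then show ?thesis by (simp add: cyl_def funpow_shift)
qed

lemma cyl_eq_cyl: "y \<in> cyl X n x \<Longrightarrow> cyl X n y = cyl X n x"
  by (auto simp: cyl_def)

lemma cyl_in_sets: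
  assumes "sets M = sets (restrict_space borel X)"
  shows "cyl X n x \<in> sets M"
proof -
  have [measurable]: "(\<lambda>y::nat \<Rightarrow> nat. y i) \<in> borel_measurable borel" for i
    by (intro borel_measurable_continuous_onI continuous_on_product_coordinates)
  have "{y. \<forall>i<n. y i = x i} \<in> sets borel" by measurable
  moreover have "cyl X n x = X \<inter> {y. \<forall>i<n. y i = x i}" by (auto simp: cyl_def)
  ultimately show ?thesis unfolding assms sets_restrict_space by blast
qed

lemma finite_cylinders:
  assumes "subshift X"
  shows "finite (cyl X n ` X)"
proof -
  obtain A where "finite A" and A: "\<forall>x\<in>X. \<forall>i. x i \<in> A"
    using assms unfolding subshift_def by blast
  have "cyl X n ` X \<subseteq> (\<lambda>w. {y \<in> X. \<forall>i<n. y i = w i}) ` ({..<n} \<rightarrow>\<^sub>E A)"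
  proof
    fix C assume "C \<in> cyl X n ` X"
    then obtain x where "x \<in> X" "C = cyl X n x" by blast
    then have "restrict x {..<n} \<in> {..<n} \<rightarrow>\<^sub>E A" and "C = {y \<in> X. \<forall>i<n. y i = restrict x {..<n} i}"
      using A by (auto simp: cyl_def)
    then show "C \<in> (\<lambda>w. {y \<in> X. \<forall>i<n. y i = w i}) ` ({..<n} \<rightarrow>\<^sub>E A)" by blast
  qed
  then show ?thesis
    using \<open>finite A\<close> by (meson finite_PiE finite_imageI finite_lessThan finite_subset)
qed

lemma disjoint_family_cylinders: "disjoint_family_on (\<lambda>C. C) (cyl X n ` X)"
  unfolding disjoint_family_on_def by (metis cyl_eq_cyl disjoint_iff imageE)

definition slow_return :: "(nat \<Rightarrow> nat) measure \<Rightarrow> (nat \<Rightarrow> nat) set \<Rightarrow> nat \<Rightarrow> (nat \<Rightarrow> nat) set" where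
  "slow_return M X n = {x \<in> X. \<forall>k\<in>{1..nat \<lfloor>real n ^ 2 / measure M (cyl X n x)\<rfloor>}. \<not> (\<forall>i<n. x (k + i) = x i)}"

lemma slow_return_eq_Union_non_return:
  assumes "shift ` X \<subseteq> X"
  shows "slow_return M X n = (\<Union>C\<in>cyl X n ` X. non_return shift C (nat \<lfloor>real n ^ 2 / measure M C\<rfloor>))"
    (is "_ = (\<Union>C\<in>_. non_return shift C (?m C))")
proof -
  have non_return_cyl_iff: "x \<in> non_return shift (cyl X n x) m \<longleftrightarrow>
      x \<in> X \<and> (\<forall>k\<in>{1..m}. \<not> (\<forall>i<n. x (k + i) = x i))" for x m
  proof (cases "x \<in> X")
    case True
    then have "x \<in> cyl X n x" by (simp add: cyl_def)
    with True show ?thesis by (simp add: non_return_def funpow_shift_in_cyl_iff[OF assms True])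
  next
    case False
    then show ?thesis by (simp add: non_return_def cyl_def)
  qed
  show ?thesis
  proof (intro set_eqI iffI)
    fix x assume x: "x \<in> slow_return M X n"
    then have "x \<in> X" by (simp add: slow_return_def)
    moreover from x have "x \<in> non_return shift (cyl X n x) (?m (cyl X n x))"
      unfolding non_return_cyl_iff by (simp add: slow_return_def)
    ultimately show "x \<in> (\<Union>C\<in>cyl X n ` X. non_return shift C (?m C))"
      by (intro UN_I[where a = "cyl X n x"] imageI)
  next
    fix x assume "x \<in> (\<Union>C\<in>cyl X n ` X. non_return shift C (?m C))"
    then obtain C where "C \<in> cyl X n ` X" and x_non_return: "x \<in> non_return shift C (?m C)"
      by (rule UN_E)
    from \<open>C \<in> cyl X n ` X\<close> obtain x0 where C: "C = cyl X n x0" by blast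
    have "x \<in> cyl X n x0"
      using non_return_subset x_non_return unfolding C by (rule subsetD)
    then have "C = cyl X n x"
      unfolding C by (rule cyl_eq_cyl[symmetric])
    with x_non_return have "x \<in> non_return shift (cyl X n x) (?m (cyl X n x))"
      by simp
    then show "x \<in> slow_return M X n"
      unfolding non_return_cyl_iff by (simp add: slow_return_def)
  qed
qed

locale subshift_invariant_measure = measure_preserving_transformation M shift
  for M :: "(nat \<Rightarrow> nat) measure" +
  fixes X :: "(nat \<Rightarrow> nat) set"
  assumes subshift: "subshift X"
    and sets_eq: "sets M = sets (restrict_space borel X)"
begin

lemma space_eq: "space M = X"
  using sets_eq_imp_space_eq[OF sets_eq] by (simp add: space_restrict_space)

lemma shift_image_subset: "shift ` X \<subseteq> X"
  using subshift by (simp add: subshift_def)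

lemma slow_return_in_sets: "slow_return M X n \<in> sets M"
  unfolding slow_return_eq_Union_non_return[OF shift_image_subset]
  using finite_cylinders[OF subshift]
  by (intro sets.finite_UN) (auto intro: non_return_in_sets cyl_in_sets[OF sets_eq])

lemma measure_slow_return_le:
  assumes "n \<ge> 1"
  shows "measure M (slow_return M X n) \<le> 1 / real n ^ 2"
proof -
  have C: "C \<in> sets M" if "C \<in> cyl X n ` X" for C
    using that cyl_in_sets[OF sets_eq] by blast
  have measure_Union: "measure M (\<Union>C\<in>cyl X n ` X. C) = (\<Sum>C\<in>cyl X n ` X. measure M C)"
    using finite_cylinders[OF subshift] C disjoint_family_cylinders
    by (intro finite_measure_finite_Union) auto
  have "measure M (slow_return M X n)
      \<le> (\<Sum>C\<in>cyl X n ` X. measure M (non_return shift C (nat \<lfloor>real n ^ 2 / measure M C\<rfloor>)))"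
    unfolding slow_return_eq_Union_non_return[OF shift_image_subset]
    using finite_cylinders[OF subshift] C
    by (intro finite_measure_subadditive_finite) (auto intro: non_return_in_sets)
  also have "\<dots> \<le> (\<Sum>C\<in>cyl X n ` X. measure M C / real n ^ 2)"
    using assms C
    by (intro sum_mono measure_non_return_floor_le) auto
  also have "\<dots> = (\<Sum>C\<in>cyl X n ` X. measure M C) / real n ^ 2"
    by (simp add: sum_divide_distrib)
  also have "\<dots> = measure M (\<Union>C\<in>cyl X n ` X. C) / real n ^ 2"
    by (simp only: measure_Union)
  also have "\<dots> \<le> 1 / real n ^ 2"
    by (intro divide_right_mono prob_le_1) simp
  finally show ?thesis .
qed

lemma AE_eventually_not_slow_return:
  "AE x in M. eventually (\<lambda>n. x \<notin> slow_return M X n) sequentially"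
proof -
  have "summable (\<lambda>n. measure M (slow_return M X n))"
  proof (rule summable_comparison_test')
    show "summable (\<lambda>n. 1 / real n ^ 2)"
      using inverse_power_summable[of 2, where 'a=real] by (simp add: inverse_eq_divide)
    show "norm (measure M (slow_return M X n)) \<le> 1 / real n ^ 2" if "n \<ge> 1" for n
      using measure_slow_return_le[OF that] by simp
  qed
  then have "AE x in M. eventually (\<lambda>n. x \<in> space M - slow_return M X n) sequentially"
    by (intro borel_cantelli_AE1 slow_return_in_sets) (simp_all add: less_top[symmetric])
  then show ?thesis
    by eventually_elim (auto elim: eventually_mono)
qed

end

lemma one_le_return_time: "1 \<le> return_time n x"
  unfolding return_time_def by (rule Inf_greatest) auto

lemma return_rate_nonneg: "0 \<le> return_rate \<beta> x n"
proof (cases "return_time n x = \<infinity>")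
  case False
  with one_le_return_time[of n x] have "1 \<le> real_of_ereal (return_time n x)"
    by (cases "return_time n x") auto
  with False show ?thesis by (simp add: return_rate_def)
qed (simp add: return_rate_def)

lemma return_rate_le_ln:
  assumes "k > 0" "\<forall>i<n. x (k + i) = x i"
  shows "return_rate \<beta> x n \<le> ereal (ln (real k) / real n powr \<beta>)"
proof -
  have "return_time n x \<le> ereal (real k)"
    unfolding return_time_def by (rule Inf_lower) (use assms in blast)
  with one_le_return_time[of n x] obtain r where "return_time n x = ereal r" "1 \<le> r" "r \<le> real k"
    by (cases "return_time n x") auto
  then show ?thesis
    by (simp add: return_rate_def divide_right_mono)
qed

lemma return_rate_le_meas_rate:
  assumes "x \<in> X" "x \<notin> slow_return M X n" "measure M (cyl X n x) > 0"
  shows "return_rate \<beta> x n \<le> ereal (2 * ln (real n) / real n powr \<beta>) + meas_rate M X \<beta> x n"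
proof -
  let ?\<mu> = "measure M (cyl X n x)"
  obtain k where k: "k \<in> {1..nat \<lfloor>real n ^ 2 / ?\<mu>\<rfloor>}" and k_return: "\<forall>i<n. x (k + i) = x i"
    using assms(1,2) by (auto simp: slow_return_def)
  have "real k \<le> real (nat \<lfloor>real n ^ 2 / ?\<mu>\<rfloor>)"
    using k by (simp only: atLeastAtMost_iff of_nat_le_iff)
  also have "\<dots> \<le> real n ^ 2 / ?\<mu>"
    using assms(3) by (intro of_nat_floor) simp
  finally have k_le: "real k \<le> real n ^ 2 / ?\<mu>" .
  with k have "n > 0"
    by (cases n) auto
  have "ln (real k) \<le> ln (real n ^ 2 / ?\<mu>)"
    using k k_le by simp
  also have "\<dots> = 2 * ln (real n) - ln ?\<mu>"
    using \<open>n > 0\<close> assms(3) by (simp add: ln_div ln_realpow)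
  finally have "ln (real k) \<le> 2 * ln (real n) - ln ?\<mu>" .
  then have "ln (real k) / real n powr \<beta> \<le> (2 * ln (real n) - ln ?\<mu>) / real n powr \<beta>"
    by (rule divide_right_mono) simp
  moreover have "return_rate \<beta> x n \<le> ereal (ln (real k) / real n powr \<beta>)"
    using k by (intro return_rate_le_ln[OF _ k_return]) simp
  ultimately show ?thesis
    using assms(3) by (simp add: meas_rate_def diff_divide_distrib order_trans)
qed

lemma limsup_return_rate_eq_0:
  assumes "\<beta> > 0" "x \<in> X" "limsup (meas_rate M X \<beta> x) = 0"
    and "eventually (\<lambda>n. x \<notin> slow_return M X n) sequentially"
  shows "limsup (return_rate \<beta> x) = 0"
proof (rule antisym)
  have "eventually (\<lambda>n. meas_rate M X \<beta> x n < \<infinity>) sequentially"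
    using assms(3) by (intro Limsup_lessD) simp
  then have "eventually (\<lambda>n. measure M (cyl X n x) > 0) sequentially"
    by (rule eventually_mono) (auto simp: meas_rate_def less_le)
  with assms(4) have "eventually (\<lambda>n. return_rate \<beta> x n
      \<le> ereal (2 * ln (real n) / real n powr \<beta>) + meas_rate M X \<beta> x n) sequentially"
    by eventually_elim (rule return_rate_le_meas_rate[OF assms(2)])
  then have "limsup (return_rate \<beta> x)
      \<le> limsup (\<lambda>n. ereal (2 * ln (real n) / real n powr \<beta>) + meas_rate M X \<beta> x n)"
    by (rule Limsup_mono)
  also have "\<dots> \<le> limsup (\<lambda>n. ereal (2 * ln (real n) / real n powr \<beta>)) + limsup (meas_rate M X \<beta> x)"
    by (rule ereal_limsup_add_mono)
  also have "limsup (\<lambda>n. ereal (2 * ln (real n) / real n powr \<beta>)) = 0"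
  proof (rule lim_imp_Limsup)
    have "(\<lambda>n. 2 * ln (real n) / real n powr \<beta>) \<longlonglongrightarrow> 0"
      using assms(1) by real_asymp
    then show "(\<lambda>n. ereal (2 * ln (real n) / real n powr \<beta>)) \<longlonglongrightarrow> 0"
      by (simp add: zero_ereal_def tendsto_ereal)
  qed simp
  finally show "limsup (return_rate \<beta> x) \<le> 0"
    using assms(3) by simp
next
  show "0 \<le> limsup (return_rate \<beta> x)"
    using Limsup_mono[of "\<lambda>_. 0" "return_rate \<beta> x" sequentially] return_rate_nonneg
    by (simp add: Limsup_const)
qed

theorem lemma4p6:
  fixes X :: "(nat \<Rightarrow> nat) set" and M :: "(nat \<Rightarrow> nat) measure" and c :: real
  assumes "subshift X"
    and "prob_space M"
    and "sets M = sets (restrict_space borel X)"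
    and "shift \<in> M \<rightarrow>\<^sub>M M"
    and "distr M M shift = M"
    and "AE x in M. has_critical_value (\<lambda>\<beta>. limsup (meas_rate M X \<beta> x)) c"
  shows "AE x in M. \<forall>\<beta>. 0 < \<beta> \<and> \<beta> > c \<longrightarrow> limsup (return_rate \<beta> x) = 0"
proof -
  interpret prob_space M by (rule assms(2))
  interpret subshift_invariant_measure M X
    using assms(1,3-5) by unfold_locales
  show ?thesis
    using AE_eventually_not_slow_return assms(6) AE_space
  proof eventually_elim
    case (elim x)
    then have "x \<in> X" using space_eq by simp
    show ?case
    proof (intro allI impI)
      fix \<beta> :: real assume "0 < \<beta> \<and> \<beta> > c"
      with elim(2) have "limsup (meas_rate M X \<beta> x) = 0"
        unfolding has_critical_value_def by blast
      with \<open>0 < \<beta> \<and> \<beta> > c\<close> \<open>x \<in> X\<close> elim(1) show "limsup (return_rate \<beta> x) = 0"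
        by (intro limsup_return_rate_eq_0) auto
    qed
  qed
qed

end
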